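(* Let the open set $\Omega\subseteq\mathbb{R}^{n+1}$ satisfy the TBHCC with constants $b,\varepsilon>0$. There exist $a\in(0,1/2)$ and $c_3>0$, depending only on $n$, $b$, $\varepsilon$, and a constant $C_1>0$ depending only on $n$, such that for every $(x_0,t_0)\in\Sigma$ and $0<r<\sqrt{t_0-T_{\min}}/4$ there is a Borel measure $\mu$ on $\mathbb{R}^{n+1}$ with $$\mu\big((Q_r(x_0)\times(t_0-r^2,t_0-(ar)^2))\cap\Omega^c\big)\ge c_3r^{n+\varepsilon}$$ and $\mu(A)\le C_1(\operatorname{diam}_pA)^{n+\varepsilon}$ for all Borel sets $A\subseteq\mathbb{R}^{n+1}$.
   Context: Points of $\mathbb{R}^{n+1}=\mathbb{R}^n\times\mathbb{R}$; parabolic norm $\|(X,t)\|=\max\{|X|,|t|^{1/2}\}$; $\operatorname{diam}_p$ is diameter in the parabolic distance. $\mathbf{Q}_r(X,t)=\{(Y,s):\|(X,t)-(Y,s)\|<r\}$, $\mathbf{Q}_r^{\mp}(X,t)=\mathbf{Q}_r(X,t)\cap\{s\lessgtr t\}$, $Q_r(X)=\{Y\in\mathbb{R}^n:|X-Y|<r\}$. Boundary: $T_{\min},T_{\max}$ inf/sup of times meeting $\Omega$; $\mathcal{P}\Omega=\{(x,t)\in\partial\Omega:\mathbf{Q}^-_r(x,t)\cap\Omega^c\ne\emptyset\ \forall r\}$; $\mathcal{B}\Omega=\{(x,t)\in\mathcal{P}\Omega:\exists r,\mathbf{Q}_r^+(x,t)\subseteq\Omega\}$; $\partial_s\Omega=\{(x,t)\in\partial\Omega\setminus\mathcal{P}\Omega:\exists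 r,\mathbf{Q}_r^+(x,t)\cap\Omega=\emptyset\}$; $\Sigma$ is $\partial\Omega$ minus $\mathcal{B}\Omega\cap\{t=T_{\min}\}$ (if $T_{\min}>-\infty$) and minus $\partial_s\Omega\cap\{t=T_{\max}\}$ (if $T_{\max}<\infty$). Hausdorff content $\mathcal{H}^s_{\infty,p}(A)=\inf\{\sum_i(\operatorname{diam}_pA_i)^s:A\subseteq\bigcup_iA_i\}$. TBHCC with constants $b,\varepsilon$: $\mathcal{H}^{n+\varepsilon}_{\infty,p}(\mathbf{Q}^-_r(x_0,t_0)\cap\Omega^c)\ge b\,r^{n+\varepsilon}$ for all $(x_0,t_0)\in\Sigma$, $0<r<\sqrt{t_0-T_{\min}}/4$. *)

theory Defs
  imports "HOL-Analysis.Analysis"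
begin

text \<open>Points of R^(n+1) = R^n x R are pairs (X,t) :: (real^'n) \<times> real, with n = CARD('n).\<close>

type_synonym 'n pt = "(real^'n) \<times> real"

definition pnorm :: "'n::finite pt \<Rightarrow> real" where
  "pnorm p = max (norm (fst p)) (sqrt \<bar>snd p\<bar>)"

definition pdist :: "'n::finite pt \<Rightarrow> 'n pt \<Rightarrow> real" where
  "pdist p q = pnorm (p - q)"

text \<open>Parabolic diameter (only meaningful for bounded sets; used only on bounded sets).\<close>
definition pdiam :: "'n::finite pt set \<Rightarrow> real" where
  "pdiam A = (if A = {} then 0 else (SUP pq\<in>A \<times> A. pdist (fst pq) (snd pq)))"

definition PQ :: "real \<Rightarrow> 'n::finite pt \<Rightarrow> 'n pt set" where
  "PQ r p = {q. pdist p q < r}"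

definition PQminus :: "real \<Rightarrow> 'n::finite pt \<Rightarrow> 'n pt set" where
  "PQminus r p = PQ r p \<inter> {q. snd q < snd p}"

definition PQplus :: "real \<Rightarrow> 'n::finite pt \<Rightarrow> 'n pt set" where
  "PQplus r p = PQ r p \<inter> {q. snd q > snd p}"

definition Tmin :: "'n::finite pt set \<Rightarrow> ereal" where
  "Tmin \<Omega> = (INF p\<in>\<Omega>. ereal (snd p))"

definition Tmax :: "'n::finite pt set \<Rightarrow> ereal" where
  "Tmax \<Omega> = (SUP p\<in>\<Omega>. ereal (snd p))"

definition parabolic_bdry :: "'n::finite pt set \<Rightarrow> 'n pt set" where
  "parabolic_bdry \<Omega> = {p \<in> frontier \<Omega>. \<forall>r>0. PQminus r p \<inter> - \<Omega> \<noteq> {}}"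

definition bottom_bdry :: "'n::finite pt set \<Rightarrow> 'n pt set" where
  "bottom_bdry \<Omega> = {p \<in> parabolic_bdry \<Omega>. \<exists>r>0. PQplus r p \<subseteq> \<Omega>}"

definition singular_bdry :: "'n::finite pt set \<Rightarrow> 'n pt set" where
  "singular_bdry \<Omega> = {p \<in> frontier \<Omega> - parabolic_bdry \<Omega>. \<exists>r>0. PQplus r p \<inter> \<Omega> = {}}"

definition Sigma_bdry :: "'n::finite pt set \<Rightarrow> 'n pt set" where
  "Sigma_bdry \<Omega> = frontier \<Omega>
     - (if Tmin \<Omega> > -\<infinity> then {p \<in> bottom_bdry \<Omega>. ereal (snd p) = Tmin \<Omega>} else {})
     - (if Tmax \<Omega> < \<infinity> then {p \<in> singular_bdry \<Omega>. ereal (snd p) = Tmax \<Omega>} else {})"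

text \<open>Parabolic Hausdorff content, countable covers. Covers by unbounded sets contribute
  infinity and are omitted (only bounded covering sets are allowed).\<close>
definition phcontent :: "real \<Rightarrow> 'n::finite pt set \<Rightarrow> ennreal" where
  "phcontent s A = (INF C\<in>{C :: nat \<Rightarrow> 'n pt set. A \<subseteq> (\<Union>i. C i) \<and> (\<forall>i. bounded (C i))}.
       (\<Sum>i. ennreal (pdiam (C i) powr s)))"

text \<open>Time-backwards Hausdorff content condition. The radius condition
  0 < r < sqrt(t0 - Tmin)/4 is written as Tmin < t0 - (4r)^2 (in the extended reals).\<close>
definition TBHCC :: "'n::finite pt set \<Rightarrow> real \<Rightarrow> real \<Rightarrow> bool" where
  "TBHCC \<Omega> b \<epsilon> \<longleftrightarrow> (\<forall>p\<in>Sigma_bdry \<Omega>. \<forall>r. 0 < r \<and> Tmin \<Omega> < ereal (snd p - (4*r)^2) \<longrightarrow>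
      phcontent (real CARD('n) + \<epsilon>) (PQminus r p \<inter> - \<Omega>) \<ge> ennreal (b * r powr (real CARD('n) + \<epsilon>)))"

end

(*
  Frostman's lemma for the parabolic content H = H^(n+eps)_(infty,p) does the main work.
  Below the boundary point, split the part of the complement in the backward cylinder of
  radius r/2 into a thin top layer of height (2r/2^m)^2 and a compact rest K.  The top layer
  is covered by 2^(mn) dyadic parabolic cells of side 2r/2^m, so its content is at most
  (2nr)^(n+eps) / 2^(m eps).  For large m this is at most half the TBHCC lower bound
  b (r/2)^(n+eps), so K carries at least half of it, and K lies in the region with a = 2^-m.

  Frostman's lemma itself follows from the mass distribution principle.  On the binary tree
  of dyadic parabolic cells Q of a box containing K, the weight H(K \<inter> Q) is subadditive, so
  it can be pushed down the tree to a Borel measure mu with mu(K) = H(K) and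
  mu(Q) <= H(K \<inter> Q) <= diam(Q)^(n+eps).  A set of parabolic diameter d meets at most C(n)
  cells of side comparable to d, which gives mu(A) <= C(n) d^(n+eps).
*)
theory Submission
  imports Defs
begin

section \<open>Mass distribution along a binary tree\<close>

(* Division by zero yields 0, so a node whose children both have weight 0 passes no mass on. *)
fun node_mass :: "(bool list \<Rightarrow> real) \<Rightarrow> bool list \<Rightarrow> real" where
  "node_mass F [] = F []"
| "node_mass F (b # w) = node_mass F w * F (b # w) / (F (False # w) + F (True # w))"

fun node_start :: "(bool list \<Rightarrow> real) \<Rightarrow> bool list \<Rightarrow> real" where
  "node_start F [] = 0"
| "node_start F (False # w) = node_start F w"
| "node_start F (True # w) = node_start F w + node_mass F (False # w)"

fun path_node :: "(bool list \<Rightarrow> real) \<Rightarrow> real \<Rightarrow> nat \<Rightarrow> bool list" where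
  "path_node F u 0 = []"
| "path_node F u (Suc d) =
     (node_start F (path_node F u d) + node_mass F (False # path_node F u d) \<le> u) # path_node F u d"

lemma length_path_node [simp]: "length (path_node F u d) = d"
  by (induction d) auto

lemma path_node_extends:
  assumes "d \<le> j"
  shows "\<exists>v. path_node F u j = v @ path_node F u d"
  using assms
proof (induction j)
  case (Suc j)
  then show ?case
    by (cases "d = Suc j") (auto simp: le_Suc_eq intro: exI[of _ "_ # _"])
qed simp

lemma measurable_path_node: "(\<lambda>u. path_node F u d) \<in> borel \<rightarrow>\<^sub>M count_space UNIV"
proof (induction d)
  case (Suc d)
  have step: "(\<lambda>u::real. (node_start F w + node_mass F (False # w) \<le> u) # w)
      \<in> borel \<rightarrow>\<^sub>M count_space UNIV" for w
    by measurable
  show ?case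
    using measurable_compose_countable[OF step Suc] by (simp only: path_node.simps)
qed simp

locale subadditive_tree =
  fixes F :: "bool list \<Rightarrow> real"
  assumes nonneg: "\<And>w. 0 \<le> F w"
    and subadditive: "\<And>w. F w \<le> F (False # w) + F (True # w)"
begin

lemma node_mass_bounds: "0 \<le> node_mass F w \<and> node_mass F w \<le> F w"
proof (induction w)
  case Nil
  then show ?case by (simp add: nonneg)
next
  case (Cons b w)
  let ?D = "F (False # w) + F (True # w)"
  have "node_mass F w * F (b # w) / ?D \<le> ?D * F (b # w) / ?D"
    using Cons subadditive[of w] nonneg[of "b # w"]
    by (intro divide_right_mono mult_right_mono) auto
  also have "\<dots> \<le> F (b # w)"
    by (cases "?D = 0") (simp_all add: nonneg)
  finally show ?case
    using Cons nonneg[of "b # w"] nonneg[of "False # w"] nonneg[of "True # w"] by simp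
qed

lemma node_mass_children:
  assumes "0 < node_mass F w"
  shows "node_mass F (False # w) + node_mass F (True # w) = node_mass F w"
proof -
  have "0 < F (False # w) + F (True # w)"
    using assms node_mass_bounds[of w] subadditive[of w] by linarith
  then show ?thesis
    by (simp add: add_divide_distrib[symmetric] distrib_left[symmetric])
qed

lemma path_node_interval:
  assumes "0 \<le> u" "u < F []"
  shows "node_start F (path_node F u d) \<le> u
    \<and> u < node_start F (path_node F u d) + node_mass F (path_node F u d)"
proof (induction d)
  case (Suc d)
  let ?w = "path_node F u d"
  have "0 < node_mass F ?w"
    using Suc by linarith
  then show ?case
    using Suc node_mass_children[of ?w]
    by (cases "node_start F ?w + node_mass F (False # ?w) \<le> u") (auto simp del: node_mass.simps)
qed (use assms in simp)

end

locale tree_cover = subadditive_tree F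
  for F :: "bool list \<Rightarrow> real" +
  fixes K :: "'a::complete_space set" and S Sc :: "bool list \<Rightarrow> 'a set"
  assumes closed_K: "closed K"
    and positive_meets: "\<And>w. 0 < F w \<Longrightarrow> S w \<inter> K \<noteq> {}"
    and S_Cons: "\<And>b w. S (b # w) \<subseteq> S w"
    and S_subset_Sc: "\<And>w. S w \<subseteq> Sc w"
    and closed_Sc: "\<And>w. closed (Sc w)"
    and S_shrink: "\<And>e. 0 < e \<Longrightarrow> \<exists>D. \<forall>w. length w = D \<longrightarrow> (\<forall>x\<in>S w. \<forall>y\<in>S w. dist x y < e)"
begin

definition node_point :: "bool list \<Rightarrow> 'a" where
  "node_point w = (SOME x. x \<in> S w \<inter> K)"

(* u in [0, F []) selects the branch whose node intervals
   [node_start F w, node_start F w + node_mass F w) contain it; Lebesgue measure is pushed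
   forward along the point where the sets S of that branch shrink to. *)
definition branch_point :: "real \<Rightarrow> 'a" where
  "branch_point u = lim (\<lambda>d. node_point (path_node F u d))"

definition tree_measure :: "'a measure" where
  "tree_measure = distr (restrict_space lborel {0..<F []}) borel branch_point"

lemma S_path_node_mono:
  assumes "d \<le> j"
  shows "S (path_node F u j) \<subseteq> S (path_node F u d)"
proof -
  have S_append: "S (v @ w) \<subseteq> S w" for v w
    by (induction v) (use S_Cons in auto)
  then show ?thesis
    using path_node_extends[OF assms] by metis
qed

lemma node_point_path_node:
  assumes "u \<in> {0..<F []}"
  shows "node_point (path_node F u d) \<in> S (path_node F u d) \<inter> K"
proof -
  have "0 < node_mass F (path_node F u d)"
    using path_node_interval[of u d] assms by auto
  then have "0 < F (path_node F u d)"
    using node_mass_bounds[of "path_node F u d"] by linarith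
  then show ?thesis
    using positive_meets unfolding node_point_def by (metis ex_in_conv someI)
qed

lemma branch_point_limit:
  assumes "u \<in> {0..<F []}"
  shows "(\<lambda>d. node_point (path_node F u d)) \<longlonglongrightarrow> branch_point u"
proof -
  have "Cauchy (\<lambda>d. node_point (path_node F u d))"
  proof (rule metric_CauchyI)
    fix e :: real
    assume "0 < e"
    then obtain D where D: "\<forall>w. length w = D \<longrightarrow> (\<forall>x\<in>S w. \<forall>y\<in>S w. dist x y < e)"
      using S_shrink by blast
    have "node_point (path_node F u j) \<in> S (path_node F u D)" if "D \<le> j" for j
      using node_point_path_node[OF assms, of j] S_path_node_mono[OF that] by blast
    then show "\<exists>M. \<forall>m\<ge>M. \<forall>n\<ge>M. dist (node_point (path_node F u m)) (node_point (path_node F u n)) < e"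
      using D by (metis length_path_node)
  qed
  then show ?thesis
    unfolding branch_point_def by (simp add: Cauchy_convergent_iff convergent_LIMSEQ_iff)
qed

lemma branch_point_in_K:
  assumes "u \<in> {0..<F []}"
  shows "branch_point u \<in> K"
  using closed_sequentially[OF closed_K _ branch_point_limit[OF assms]] node_point_path_node[OF assms]
  by blast

lemma branch_point_in_Sc:
  assumes "u \<in> {0..<F []}"
  shows "branch_point u \<in> Sc (path_node F u d)"
proof -
  have "node_point (path_node F u (j + d)) \<in> Sc (path_node F u d)" for j
    using node_point_path_node[OF assms, of "j + d"] S_path_node_mono[of d "j + d"] S_subset_Sc
    by fastforce
  then show ?thesis
    using closed_sequentially[OF closed_Sc _ LIMSEQ_ignore_initial_segment[OF branch_point_limit[OF assms], of d]]
    by blast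
qed

lemma measurable_branch_point: "branch_point \<in> restrict_space lborel {0..<F []} \<rightarrow>\<^sub>M borel"
proof (rule borel_measurable_LIMSEQ_metric[where f = "\<lambda>d u. node_point (path_node F u d)"])
  have "node_point \<in> count_space UNIV \<rightarrow>\<^sub>M borel"
    by simp
  then have "(\<lambda>u. node_point (path_node F u d)) \<in> borel \<rightarrow>\<^sub>M borel" for d
    using measurable_path_node by (rule measurable_compose[rotated])
  then show "(\<lambda>u. node_point (path_node F u d)) \<in> borel_measurable (restrict_space lborel {0..<F []})" for d
    by (intro measurable_restrict_space1) simp
qed (simp add: space_restrict_space branch_point_limit)

lemma sets_tree_measure [simp]: "sets tree_measure = sets borel"
  by (simp add: tree_measure_def)

lemma emeasure_tree_measure:
  assumes "A \<in> sets borel"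
  shows "emeasure tree_measure A = emeasure lborel (branch_point -` A \<inter> {0..<F []})"
  unfolding tree_measure_def using assms measurable_branch_point
  by (simp add: emeasure_distr space_restrict_space emeasure_restrict_space)

lemma emeasure_tree_measure_K: "emeasure tree_measure K = ennreal (F [])"
proof -
  have "branch_point -` K \<inter> {0..<F []} = {0..<F []}"
    using branch_point_in_K by auto
  then show ?thesis
    using emeasure_tree_measure[of K] closed_K nonneg[of "[]"] by simp
qed

lemma emeasure_tree_measure_le:
  assumes "A \<in> sets borel"
  shows "emeasure tree_measure A \<le> ennreal (\<Sum>w | length w = d \<and> Sc w \<inter> A \<noteq> {}. F w)"
proof -
  define W where "W = {w. length w = d \<and> Sc w \<inter> A \<noteq> {}}"
  have "finite W"
    using finite_lists_length_eq[of "UNIV :: bool set" d] unfolding W_def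
    by (rule rev_finite_subset) auto
  have "branch_point -` A \<inter> {0..<F []} \<subseteq> (\<Union>w\<in>W. {node_start F w..<node_start F w + node_mass F w})"
  proof
    fix u
    assume u: "u \<in> branch_point -` A \<inter> {0..<F []}"
    then have "path_node F u d \<in> W"
      using branch_point_in_Sc[of u d] unfolding W_def by auto
    then show "u \<in> (\<Union>w\<in>W. {node_start F w..<node_start F w + node_mass F w})"
      using path_node_interval[of u d] u by auto
  qed
  then have "emeasure tree_measure A
      \<le> emeasure lborel (\<Union>w\<in>W. {node_start F w..<node_start F w + node_mass F w})"
    using assms by (simp add: emeasure_tree_measure emeasure_mono)
  also have "\<dots> \<le> (\<Sum>w\<in>W. emeasure lborel {node_start F w..<node_start F w + node_mass F w})"
    using \<open>finite W\<close> by (rule emeasure_subadditive_finite) auto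
  also have "\<dots> \<le> (\<Sum>w\<in>W. ennreal (F w))"
    using node_mass_bounds by (intro sum_mono) (simp add: ennreal_leI)
  also have "\<dots> = ennreal (\<Sum>w\<in>W. F w)"
    using nonneg by simp
  finally show ?thesis
    unfolding W_def .
qed

end

section \<open>The parabolic distance\<close>

lemma norm_fst_le_pnorm: "norm (fst z) \<le> pnorm z"
  unfolding pnorm_def by simp

lemma sqrt_abs_snd_le_pnorm: "sqrt \<bar>snd z\<bar> \<le> pnorm z"
  unfolding pnorm_def by simp

lemma pnorm_le_norm_plus_1: "pnorm (z :: 'n::finite pt) \<le> norm z + 1"
proof -
  have "sqrt \<bar>snd z\<bar> \<le> \<bar>snd z\<bar> + 1"
    by (rule real_le_lsqrt) (auto simp: power2_eq_square algebra_simps)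
  then show ?thesis
    unfolding pnorm_def using norm_fst_le[of "fst z" "snd z"] norm_snd_le[of "snd z" "fst z"] by auto
qed

lemma pdist_nonneg: "0 \<le> pdist p q"
  unfolding pdist_def pnorm_def by (simp add: le_max_iff_disj)

lemma pdist_self [simp]: "pdist p p = 0"
  unfolding pdist_def pnorm_def by simp

lemma abs_component_le_pdist: "\<bar>fst p $ i - fst q $ i\<bar> \<le> pdist p q"
  using component_le_norm_cart[of "fst p - fst q" i] norm_fst_le_pnorm[of "p - q"]
  unfolding pdist_def by simp

lemma abs_time_le_pdist_sq: "\<bar>snd p - snd q\<bar> \<le> (pdist p q)\<^sup>2"
  using sqrt_abs_snd_le_pnorm[of "p - q"] unfolding pdist_def
  by (metis snd_diff sqrt_le_D)

lemma dist_le_pdist: "dist p q \<le> pdist p q + (pdist p q)\<^sup>2"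
proof -
  have "dist p q = norm (fst p - fst q, snd p - snd q)"
    by (metis dist_norm fst_diff snd_diff prod.collapse)
  also have "\<dots> \<le> norm (fst p - fst q) + norm (snd p - snd q)"
    by (rule norm_Pair_le)
  finally have "dist p q \<le> norm (fst p - fst q) + norm (snd p - snd q)" .
  then show ?thesis
    using norm_fst_le_pnorm[of "p - q"] abs_time_le_pdist_sq[of p q] unfolding pdist_def by simp
qed

lemma bdd_above_pdist:
  assumes "bounded (A :: 'n::finite pt set)"
  shows "bdd_above ((\<lambda>pq. pdist (fst pq) (snd pq)) ` (A \<times> A))"
proof -
  obtain B where B: "\<forall>x\<in>A. norm x \<le> B"
    using assms bounded_iff by blast
  have "pdist p q \<le> 2 * B + 1" if "p \<in> A" "q \<in> A" for p q
  proof -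
    have "norm p \<le> B" "norm q \<le> B"
      using B that by auto
    then show ?thesis
      using pnorm_le_norm_plus_1[of "p - q"] norm_triangle_ineq4[of p q] unfolding pdist_def by linarith
  qed
  then show ?thesis
    unfolding bdd_above_def by fastforce
qed

lemma pdist_le_pdiam:
  assumes "bounded A" "p \<in> A" "q \<in> A"
  shows "pdist p q \<le> pdiam A"
  using cSUP_upper[OF _ bdd_above_pdist[OF assms(1)], of "(p, q)"] assms
  unfolding pdiam_def by auto

lemma pdiam_le:
  assumes "\<And>p q. p \<in> A \<Longrightarrow> q \<in> A \<Longrightarrow> pdist p q \<le> c" "0 \<le> c"
  shows "pdiam A \<le> c"
  unfolding pdiam_def using assms by (auto intro: cSUP_least)

lemma pdiam_nonneg:
  assumes "bounded A"
  shows "0 \<le> pdiam A"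
proof (cases "A = {}")
  case False
  then obtain p where "p \<in> A"
    by blast
  then show ?thesis
    using pdist_le_pdiam[OF assms, of p p] by simp
qed (simp add: pdiam_def)

section \<open>Parabolic Hausdorff content\<close>

lemma phcontent_le_cover:
  assumes "A \<subseteq> (\<Union>i. C i)" "\<And>i. bounded (C i)"
  shows "phcontent s A \<le> (\<Sum>i. ennreal (pdiam (C i) powr s))"
  unfolding phcontent_def using assms by (intro INF_lower) auto

lemma phcontent_mono:
  assumes "A \<subseteq> B"
  shows "phcontent s A \<le> phcontent s B"
  unfolding phcontent_def using assms by (intro INF_superset_mono) auto

lemma phcontent_le_pdiam:
  assumes "bounded B" "A \<subseteq> B"
  shows "phcontent s A \<le> ennreal (pdiam B powr s)"
proof -
  define C where "C i = (if i = 0 then B else {})" for i :: nat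
  have "phcontent s A \<le> (\<Sum>i. ennreal (pdiam (C i) powr s))"
    using assms by (intro phcontent_le_cover) (auto simp: C_def)
  also have "\<dots> = (\<Sum>i\<in>{0}. ennreal (pdiam (C i) powr s))"
    by (rule suminf_finite) (auto simp: C_def pdiam_def)
  finally show ?thesis
    by (simp add: C_def)
qed

lemma phcontent_empty [simp]: "phcontent s {} = 0"
  using phcontent_le_pdiam[of "{}" "{}" s] by (simp add: pdiam_def)

lemma suminf_interleave:
  fixes f g :: "nat \<Rightarrow> ennreal"
  shows "(\<Sum>i. if even i then f (i div 2) else g (i div 2)) = (\<Sum>i. f i) + (\<Sum>i. g i)"
proof -
  define h where "h i = (if even i then f (i div 2) else g (i div 2))" for i
  have "(\<lambda>n. sum h {n * 2..<n * 2 + 2}) sums (suminf h)"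
    by (rule sums_group) (simp_all add: summable_sums)
  moreover have "{n * 2..<n * 2 + 2} = {2 * n, 2 * n + 1}" for n :: nat
    by auto
  ultimately have "(\<lambda>n. f n + g n) sums (suminf h)"
    by (simp add: h_def)
  moreover have "(\<lambda>n. f n + g n) sums ((\<Sum>i. f i) + (\<Sum>i. g i))"
    by (intro sums_add summable_sums) simp_all
  ultimately show ?thesis
    unfolding h_def by (metis sums_unique2)
qed

lemma phcontent_Un_le:
  fixes A B :: "'n::finite pt set"
  shows "phcontent s (A \<union> B) \<le> phcontent s A + phcontent s B"
proof (rule ennreal_le_epsilon)
  fix e :: real
  assume fin: "phcontent s A + phcontent s B < top" and "0 < e"
  let ?sum = "\<lambda>C. \<Sum>i. ennreal (pdiam (C i) powr s)"
  have approx: "\<exists>C. X \<subseteq> (\<Union>i. C i) \<and> (\<forall>i. bounded (C i)) \<and> ?sum C < phcontent s X + ennreal (e / 2)"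
    if "phcontent s X \<noteq> \<infinity>" for X :: "'n pt set"
    using INF_approx_ennreal[OF _ phcontent_def that] \<open>0 < e\<close> by fastforce
  have "phcontent s A \<noteq> \<infinity>" "phcontent s B \<noteq> \<infinity>"
    using fin by auto
  obtain C where
    C: "A \<subseteq> (\<Union>i. C i)" "\<forall>i. bounded (C i)" "?sum C < phcontent s A + ennreal (e / 2)"
    using approx[OF \<open>phcontent s A \<noteq> \<infinity>\<close>] by blast
  obtain D where
    D: "B \<subseteq> (\<Union>i. D i)" "\<forall>i. bounded (D i)" "?sum D < phcontent s B + ennreal (e / 2)"
    using approx[OF \<open>phcontent s B \<noteq> \<infinity>\<close>] by blast
  define E where "E i = (if even i then C (i div 2) else D (i div 2))" for i
  have "A \<union> B \<subseteq> (\<Union>i. E i)"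
  proof
    fix x
    assume "x \<in> A \<union> B"
    then obtain i where "x \<in> C i \<or> x \<in> D i"
      using C(1) D(1) by blast
    then have "x \<in> E (2 * i) \<or> x \<in> E (2 * i + 1)"
      by (simp add: E_def)
    then show "x \<in> (\<Union>i. E i)"
      by blast
  qed
  then have "phcontent s (A \<union> B) \<le> ?sum E"
    using C(2) D(2) by (intro phcontent_le_cover) (auto simp: E_def)
  also have "\<dots> = (\<Sum>i. if even i then ennreal (pdiam (C (i div 2)) powr s)
      else ennreal (pdiam (D (i div 2)) powr s))"
    by (intro suminf_cong) (simp add: E_def)
  also have "\<dots> = ?sum C + ?sum D"
    by (rule suminf_interleave)
  also have "\<dots> \<le> phcontent s A + ennreal (e / 2) + (phcontent s B + ennreal (e / 2))"
    using C(3) D(3) by (intro add_mono) auto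
  also have "\<dots> = phcontent s A + phcontent s B + ennreal e"
    using \<open>0 < e\<close> by (simp add: ac_simps flip: ennreal_plus)
  finally show "phcontent s (A \<union> B) \<le> phcontent s A + phcontent s B + ennreal e" .
qed

lemma phcontent_UN_le:
  assumes "finite W"
  shows "phcontent s (\<Union>w\<in>W. X w) \<le> (\<Sum>w\<in>W. phcontent s (X w))"
  using assms
proof (induction W rule: finite_induct)
  case (insert x F)
  then show ?case
    using phcontent_Un_le[of s "X x" "\<Union>w\<in>F. X w"] by (auto intro: order_trans add_left_mono)
qed simp

section \<open>Dyadic parabolic cells\<close>

lemma ex_dyadic_less:
  fixes c x :: real
  assumes "0 < x"
  shows "\<exists>k. c / 2 ^ k < x"
proof -
  obtain k where "(1 / 2) ^ k < x / max 1 c"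
    using real_arch_pow_inv[of "x / max 1 c" "1 / 2"] assms by auto
  then have "max 1 c / 2 ^ k < x"
    by (simp add: field_simps power_one_over)
  then show ?thesis
    by (meson divide_right_mono le_less_trans max.cobounded2 zero_le_power zero_le_numeral)
qed

lemma dyadic_bracket:
  fixes c d :: real
  assumes "0 < d" "d < c"
  shows "\<exists>k. c / 2 ^ Suc k \<le> d \<and> d < c / 2 ^ k"
proof -
  have ex: "\<exists>k. c / 2 ^ k \<le> d"
    using ex_dyadic_less[OF assms(1), of c] less_imp_le by blast
  define k where "k = (LEAST k. c / 2 ^ k \<le> d)"
  have "c / 2 ^ k \<le> d"
    unfolding k_def by (rule LeastI_ex[OF ex])
  moreover have "k \<noteq> 0"
    using calculation assms(2) by (metis div_by_1 not_le power_0)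
  then obtain j where j: "k = Suc j"
    using not0_implies_Suc by blast
  moreover have "\<not> c / 2 ^ j \<le> d"
    using not_less_Least[of j "\<lambda>k. c / 2 ^ k \<le> d"] j unfolding k_def by simp
  ultimately show ?thesis
    by (auto simp: not_le)
qed

locale parabolic_cells =
  fixes e :: "nat \<Rightarrow> 'n::finite" and L :: real and a0 :: "real^'n" and ta0 :: real
  assumes enum: "bij_betw e {..<CARD('n)} UNIV" and L_pos: "0 < L"
begin

(* Each block of CARD('n) + 2 consecutive levels halves every space side once (coordinate e j
   at the j-th level of the block) and the time side twice, so the cells at depth
   (CARD('n) + 2) * k are parabolic cubes of side L / 2 ^ k. *)
definition split_dir :: "nat \<Rightarrow> 'n option" where
  "split_dir d = (if d mod (CARD('n) + 2) < CARD('n) then Some (e (d mod (CARD('n) + 2))) else None)"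

fun side :: "nat \<Rightarrow> 'n \<Rightarrow> real" where
  "side 0 i = L"
| "side (Suc d) i = (if split_dir d = Some i then side d i / 2 else side d i)"

fun height :: "nat \<Rightarrow> real" where
  "height 0 = L\<^sup>2"
| "height (Suc d) = (if split_dir d = None then height d / 2 else height d)"

lemma side_pos: "0 < side d i"
  using L_pos by (induction d) auto

lemma height_pos: "0 < height d"
  using L_pos by (induction d) auto

lemma split_dir_in_block:
  assumes "j < CARD('n) + 2"
  shows "split_dir ((CARD('n) + 2) * k + j) = (if j < CARD('n) then Some (e j) else None)"
proof -
  have "((CARD('n) + 2) * k + j) mod (CARD('n) + 2) = j"
    using assms by (metis add.commute mult.commute mod_less mod_mult_self1)
  then show ?thesis
    by (simp add: split_dir_def)
qed

lemma side_in_block: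
  assumes "j \<le> CARD('n) + 2"
  shows "side ((CARD('n) + 2) * k + j) i
    = side ((CARD('n) + 2) * k) i / (if \<exists>m<j. m < CARD('n) \<and> e m = i then 2 else 1)"
  using assms
proof (induction j)
  case (Suc j)
  have e_inj: "m = j" if "m < CARD('n)" "j < CARD('n)" "e m = e j" for m
    using enum that unfolding bij_betw_def inj_on_def by auto
  have "(\<exists>m<Suc j. m < CARD('n) \<and> e m = i)
      \<longleftrightarrow> (\<exists>m<j. m < CARD('n) \<and> e m = i) \<or> (j < CARD('n) \<and> e j = i)"
    using less_Suc_eq by auto
  moreover have "\<not> (\<exists>m<j. m < CARD('n) \<and> e m = i)" if "j < CARD('n)" "e j = i"
    using e_inj that by fastforce
  ultimately show ?case
    using Suc split_dir_in_block[of j k] by auto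
qed simp

lemma height_in_block:
  assumes "j \<le> CARD('n) + 2"
  shows "height ((CARD('n) + 2) * k + j) = height ((CARD('n) + 2) * k) / 2 ^ (j - CARD('n))"
  using assms
proof (induction j)
  case (Suc j)
  then show ?case
    using split_dir_in_block[of j k] by (cases "j < CARD('n)") (auto simp: Suc_diff_le)
qed simp

lemma side_block: "side ((CARD('n) + 2) * k) i = L / 2 ^ k"
proof (induction k)
  case (Suc k)
  have "\<exists>m<CARD('n) + 2. m < CARD('n) \<and> e m = i"
    using enum unfolding bij_betw_def by (metis UNIV_I imageE lessThan_iff trans_less_add1)
  then have "side ((CARD('n) + 2) * k + (CARD('n) + 2)) i = side ((CARD('n) + 2) * k) i / 2"
    using side_in_block[of "CARD('n) + 2" k i] by (simp only: if_True order_refl)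
  then show ?case
    using Suc by (simp add: algebra_simps del: side.simps)
qed simp

lemma height_block: "height ((CARD('n) + 2) * k) = (L / 2 ^ k)\<^sup>2"
proof (induction k)
  case (Suc k)
  have "height ((CARD('n) + 2) * k + (CARD('n) + 2)) = height ((CARD('n) + 2) * k) / 4"
    using height_in_block[of "CARD('n) + 2" k] by (simp del: height.simps)
  then show ?case
    using Suc by (simp add: algebra_simps power2_eq_square del: height.simps)
qed simp

fun corner :: "bool list \<Rightarrow> (real^'n) \<times> real" where
  "corner [] = (a0, ta0)"
| "corner (b # w) = (case split_dir (length w) of
     Some i \<Rightarrow> (fst (corner w) + (if b then side (Suc (length w)) i else 0) *\<^sub>R axis i 1, snd (corner w))
   | None \<Rightarrow> (fst (corner w), snd (corner w) + (if b then height (Suc (length w)) else 0)))"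

definition cell :: "bool list \<Rightarrow> 'n pt set" where
  "cell w = {p. (\<forall>i. fst (corner w) $ i \<le> fst p $ i \<and> fst p $ i < fst (corner w) $ i + side (length w) i)
     \<and> snd (corner w) \<le> snd p \<and> snd p < snd (corner w) + height (length w)}"

definition closed_cell :: "bool list \<Rightarrow> 'n pt set" where
  "closed_cell w = {p. (\<forall>i. fst (corner w) $ i \<le> fst p $ i \<and> fst p $ i \<le> fst (corner w) $ i + side (length w) i)
     \<and> snd (corner w) \<le> snd p \<and> snd p \<le> snd (corner w) + height (length w)}"

definition upper_half :: "bool list \<Rightarrow> 'n pt \<Rightarrow> bool" where
  "upper_half w p = (case split_dir (length w) of
     Some i \<Rightarrow> fst (corner w) $ i + side (length w) i / 2 \<le> fst p $ i
   | None \<Rightarrow> snd (corner w) + height (length w) / 2 \<le> snd p)"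

lemma half_interval_iff:
  fixes c x l :: real
  assumes "0 < l"
  shows "(c + (if b then l / 2 else 0) \<le> x \<and> x < c + (if b then l / 2 else 0) + l / 2)
    \<longleftrightarrow> (c \<le> x \<and> x < c + l) \<and> (b \<longleftrightarrow> c + l / 2 \<le> x)"
  using assms by auto

lemma mem_cell_Cons: "p \<in> cell (b # w) \<longleftrightarrow> p \<in> cell w \<and> (b \<longleftrightarrow> upper_half w p)"
proof (cases "split_dir (length w)")
  case None
  then show ?thesis
    using half_interval_iff[OF height_pos, where c = "snd (corner w)" and x = "snd p" and b = b]
    unfolding cell_def upper_half_def by (auto simp: add.assoc)
next
  case (Some i)
  define inside where "inside v j \<longleftrightarrow>
    fst (corner v) $ j \<le> fst p $ j \<and> fst p $ j < fst (corner v) $ j + side (length v) j" for v j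
  have corner_b: "fst (corner (b # w)) $ j
      = fst (corner w) $ j + (if j = i \<and> b then side (length w) i / 2 else 0)" for j
    using Some by (auto simp: axis_def)
  have side_b: "side (length (b # w)) j = (if j = i then side (length w) i / 2 else side (length w) j)" for j
    using Some by auto
  have "inside (b # w) j \<longleftrightarrow> inside w j" if "j \<noteq> i" for j
    using that unfolding inside_def corner_b side_b by simp
  moreover have "inside (b # w) i \<longleftrightarrow> inside w i \<and> (b \<longleftrightarrow> fst (corner w) $ i + side (length w) i / 2 \<le> fst p $ i)"
    using half_interval_iff[OF side_pos, where c = "fst (corner w) $ i" and x = "fst p $ i" and b = b]
    unfolding inside_def corner_b side_b by (simp add: add.assoc if_distrib[of "\<lambda>x. x + _"])
  ultimately have "(\<forall>j. inside (b # w) j) \<longleftrightarrow> (\<forall>j. inside w j) \<and> (b \<longleftrightarrow> fst (corner w) $ i + side (length w) i / 2 \<le> fst p $ i)"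
    by metis
  moreover have "snd (corner (b # w)) = snd (corner w)" "height (length (b # w)) = height (length w)"
    using Some by auto
  ultimately show ?thesis
    using Some unfolding cell_def upper_half_def inside_def by auto
qed

lemma mem_cell_NilI:
  assumes "\<And>i. a0 $ i \<le> fst p $ i \<and> fst p $ i < a0 $ i + L" "ta0 \<le> snd p" "snd p < ta0 + L\<^sup>2"
  shows "p \<in> cell []"
  using assms by (simp add: cell_def)

lemma cell_Cons_subset: "cell (b # w) \<subseteq> cell w"
  using mem_cell_Cons by blast

lemma cell_subset_children: "cell w \<subseteq> cell (False # w) \<union> cell (True # w)"
  using mem_cell_Cons by blast

lemma cell_subset_root: "cell w \<subseteq> cell []"
  by (induction w) (use cell_Cons_subset in blast)+

lemma disjoint_cells:
  assumes "length w = length w'" "w \<noteq> w'"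
  shows "cell w \<inter> cell w' = {}"
  using assms
proof (induction w arbitrary: w')
  case (Cons b v)
  then obtain b' v' where w': "w' = b' # v'"
    by (cases w') auto
  show ?case
  proof (cases "v = v'")
    case True
    then show ?thesis
      using Cons.prems w' mem_cell_Cons[of _ b v] mem_cell_Cons[of _ b' v'] by auto
  next
    case False
    then have "cell v \<inter> cell v' = {}"
      using Cons w' by simp
    then show ?thesis
      using w' cell_Cons_subset by blast
  qed
qed simp

lemma corner_in_cell: "corner w \<in> cell w"
  unfolding cell_def using side_pos height_pos by simp

lemma inj_on_corner: "inj_on corner {w. length w = D}"
  using disjoint_cells corner_in_cell unfolding inj_on_def
  by (metis (mono_tags, lifting) disjoint_iff mem_Collect_eq)

lemma cell_subset_closed_cell: "cell w \<subseteq> closed_cell w"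
  unfolding cell_def closed_cell_def by (auto intro: less_imp_le)

lemma closed_cell_eq_Times:
  "closed_cell w = cbox (fst (corner w)) (fst (corner w) + (\<chi> i. side (length w) i))
     \<times> {snd (corner w)..snd (corner w) + height (length w)}"
  unfolding closed_cell_def by (auto simp: mem_box_cart)

lemma closed_closed_cell: "closed (closed_cell w)"
  unfolding closed_cell_eq_Times by (intro closed_Times closed_cbox closed_atLeastAtMost)

lemma bounded_closed_cell: "bounded (closed_cell w)"
  unfolding closed_cell_eq_Times by (intro bounded_Times bounded_cbox compact_imp_bounded compact_Icc)

lemma cells_cover_root: "cell [] \<subseteq> (\<Union>w\<in>{w. length w = D}. cell w)"
proof (induction D)
  case (Suc D)
  show ?case
  proof
    fix p
    assume "p \<in> cell []"
    then obtain w b where "length w = D" "p \<in> cell (b # w)"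
      using Suc cell_subset_children by blast
    then show "p \<in> (\<Union>w\<in>{w. length w = Suc D}. cell w)"
      by force
  qed
qed simp

lemma corner_on_grid:
  "(\<forall>i. \<exists>m::nat. fst (corner w) $ i = a0 $ i + real m * side (length w) i)
     \<and> (\<exists>m::nat. snd (corner w) = ta0 + real m * height (length w))"
proof (induction w)
  case Nil
  show ?case
    by (auto intro: exI[of _ 0])
next
  case (Cons b w)
  let ?bit = "if b then 1 else 0 :: nat"
  show ?case
  proof (cases "split_dir (length w)")
    case None
    obtain m where "snd (corner w) = ta0 + real m * height (length w)"
      using Cons by blast
    then have "snd (corner (b # w)) = ta0 + real (2 * m + ?bit) * height (length (b # w))"
      using None by (simp add: algebra_simps)
    moreover have "fst (corner (b # w)) = fst (corner w)" "side (length (b # w)) i = side (length w) i" for i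
      using None by auto
    ultimately show ?thesis
      using Cons by metis
  next
    case (Some i)
    have "\<exists>m::nat. fst (corner (b # w)) $ j = a0 $ j + real m * side (length (b # w)) j" for j
    proof (cases "j = i")
      case True
      obtain m where "fst (corner w) $ i = a0 $ i + real m * side (length w) i"
        using Cons by blast
      then have "fst (corner (b # w)) $ j = a0 $ j + real (2 * m + ?bit) * side (length (b # w)) j"
        using Some True by (simp add: axis_def algebra_simps)
      then show ?thesis
        by blast
    qed (use Cons Some in \<open>auto simp: axis_def\<close>)
    then show ?thesis
      using Cons Some by auto
  qed
qed

lemma mem_closed_cell_blockD:
  assumes "length w = (CARD('n) + 2) * k" "q \<in> closed_cell w"
  shows "fst (corner w) $ i \<le> fst q $ i \<and> fst q $ i \<le> fst (corner w) $ i + L / 2 ^ k"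
    and "snd (corner w) \<le> snd q \<and> snd q \<le> snd (corner w) + (L / 2 ^ k)\<^sup>2"
proof -
  have side_w: "side (length w) j = L / 2 ^ k" for j
    by (simp only: assms(1) side_block)
  have height_w: "height (length w) = (L / 2 ^ k)\<^sup>2"
    by (simp only: assms(1) height_block)
  show "fst (corner w) $ i \<le> fst q $ i \<and> fst q $ i \<le> fst (corner w) $ i + L / 2 ^ k"
    and "snd (corner w) \<le> snd q \<and> snd q \<le> snd (corner w) + (L / 2 ^ k)\<^sup>2"
    using assms(2) unfolding closed_cell_def side_w height_w by auto
qed

lemma pdist_closed_cell_le:
  assumes "length w = (CARD('n) + 2) * k" "p \<in> closed_cell w" "q \<in> closed_cell w"
  shows "pdist p q \<le> real CARD('n) * (L / 2 ^ k)"
proof -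
  note p = mem_closed_cell_blockD[OF assms(1,2)] and q = mem_closed_cell_blockD[OF assms(1,3)]
  have "norm (fst p - fst q) \<le> (\<Sum>i\<in>UNIV. \<bar>(fst p - fst q) $ i\<bar>)"
    by (rule norm_le_l1_cart)
  also have "\<dots> \<le> real CARD('n) * (L / 2 ^ k)"
  proof (rule sum_bounded_above)
    show "\<bar>(fst p - fst q) $ i\<bar> \<le> L / 2 ^ k" for i
      using p(1)[of i] q(1)[of i] by (simp add: abs_le_iff)
  qed
  finally have "norm (fst p - fst q) \<le> real CARD('n) * (L / 2 ^ k)" .
  moreover have "\<bar>snd p - snd q\<bar> \<le> (L / 2 ^ k)\<^sup>2"
    using p(2) q(2) by (auto simp: abs_le_iff)
  then have "sqrt \<bar>snd p - snd q\<bar> \<le> real CARD('n) * (L / 2 ^ k)"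
    using L_pos real_sqrt_le_mono[of "\<bar>snd p - snd q\<bar>" "(L / 2 ^ k)\<^sup>2"]
      mult_right_mono[of 1 "real CARD('n)" "L / 2 ^ k"]
    by (simp add: Suc_le_eq)
  ultimately show ?thesis
    unfolding pdist_def pnorm_def by simp
qed

lemma pdiam_closed_cell_le:
  assumes "length w = (CARD('n) + 2) * k"
  shows "pdiam (closed_cell w) \<le> real CARD('n) * (L / 2 ^ k)"
  using pdist_closed_cell_le[OF assms] L_pos by (intro pdiam_le) auto

lemma cells_shrink:
  assumes "0 < \<epsilon>"
  shows "\<exists>D. \<forall>w. length w = D \<longrightarrow> (\<forall>x\<in>cell w. \<forall>y\<in>cell w. dist x y < \<epsilon>)"
proof -
  obtain k where k: "real CARD('n) * L / 2 ^ k < min 1 (\<epsilon> / 2)"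
    using ex_dyadic_less[of "min 1 (\<epsilon> / 2)"] assms by auto
  have "dist x y < \<epsilon>" if "length w = (CARD('n) + 2) * k" "x \<in> cell w" "y \<in> cell w" for w x y
  proof -
    have "pdist x y \<le> real CARD('n) * L / 2 ^ k"
      using pdist_closed_cell_le[of w k x y] that cell_subset_closed_cell by auto
    then have "pdist x y < min 1 (\<epsilon> / 2)"
      using k by linarith
    moreover have "(pdist x y)\<^sup>2 \<le> pdist x y"
      using calculation mult_left_le[of "pdist x y" "pdist x y"] pdist_nonneg[of x y]
      by (simp add: power2_eq_square)
    ultimately have "pdist x y + (pdist x y)\<^sup>2 < \<epsilon>"
      by linarith
    then show ?thesis
      using dist_le_pdist[of x y] by linarith
  qed
  then show ?thesis
    by blast
qed

end

section \<open>Counting cells\<close>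

lemma card_nat_interval_le:
  assumes "lo \<le> hi"
  shows "finite {m::nat. lo \<le> real m \<and> real m \<le> hi}"
    and "real (card {m::nat. lo \<le> real m \<and> real m \<le> hi}) \<le> hi - lo + 1"
proof -
  define a where "a = nat \<lceil>lo\<rceil>"
  define f where "f = nat \<lfloor>hi - lo\<rfloor>"
  have sub: "{m::nat. lo \<le> real m \<and> real m \<le> hi} \<subseteq> {a..a + f}"
  proof
    fix m
    assume "m \<in> {m::nat. lo \<le> real m \<and> real m \<le> hi}"
    then have m: "lo \<le> real m" "real m \<le> hi"
      by auto
    have "real m - real_of_int \<lceil>lo\<rceil> \<le> hi - lo"
      using m(2) le_of_int_ceiling[of lo] by linarith
    then have "\<lceil>lo\<rceil> \<le> int m" "int m - \<lceil>lo\<rceil> \<le> \<lfloor>hi - lo\<rfloor>"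
      using m(1) by (simp_all add: ceiling_le_iff le_floor_iff)
    then show "m \<in> {a..a + f}"
      unfolding a_def f_def using assms m(1) by auto
  qed
  then show "finite {m::nat. lo \<le> real m \<and> real m \<le> hi}"
    by (rule finite_subset) simp
  have "card {m::nat. lo \<le> real m \<and> real m \<le> hi} \<le> f + 1"
    using card_mono[OF _ sub] by simp
  moreover have "real f \<le> hi - lo"
    unfolding f_def using assms by simp
  ultimately show "real (card {m::nat. lo \<le> real m \<and> real m \<le> hi}) \<le> hi - lo + 1"
    by linarith
qed

lemma card_grid_points_le:
  assumes "0 < l" "lo \<le> hi"
  shows "finite {m::nat. lo \<le> a + real m * l \<and> a + real m * l \<le> hi}"
    and "real (card {m::nat. lo \<le> a + real m * l \<and> a + real m * l \<le> hi}) \<le> (hi - lo) / l + 1"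
proof -
  have eq: "{m::nat. lo \<le> a + real m * l \<and> a + real m * l \<le> hi}
      = {m::nat. (lo - a) / l \<le> real m \<and> real m \<le> (hi - a) / l}"
    using assms(1) by (auto simp: pos_divide_le_eq pos_le_divide_eq algebra_simps)
  have le: "(lo - a) / l \<le> (hi - a) / l"
    using assms by (simp add: divide_right_mono)
  show "finite {m::nat. lo \<le> a + real m * l \<and> a + real m * l \<le> hi}"
    unfolding eq using card_nat_interval_le(1)[OF le] .
  have "(hi - a) / l - (lo - a) / l = (hi - lo) / l"
    by (simp add: diff_divide_distrib)
  then show "real (card {m::nat. lo \<le> a + real m * l \<and> a + real m * l \<le> hi}) \<le> (hi - lo) / l + 1"
    unfolding eq using card_nat_interval_le(2)[OF le] by simp
qed

context parabolic_cells
begin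

lemma card_cells_le_grid:
  assumes W: "W \<subseteq> {w. length w = D}"
    and R: "\<And>w i m. w \<in> W \<Longrightarrow> fst (corner w) $ i = a0 $ i + real m * side D i \<Longrightarrow> m \<in> R i"
    and Rt: "\<And>w m. w \<in> W \<Longrightarrow> snd (corner w) = ta0 + real m * height D \<Longrightarrow> m \<in> Rt"
    and fin: "\<And>i. finite (R i)" "finite Rt"
  shows "card W \<le> (\<Prod>i\<in>UNIV. card (R i)) * card Rt"
proof -
  define grid_point where "grid_point mm = ((\<chi> i. a0 $ i + real (fst mm i) * side D i), ta0 + real (snd mm) * height D)"
    for mm :: "('n \<Rightarrow> nat) \<times> nat"
  have "corner ` W \<subseteq> grid_point ` (PiE UNIV R \<times> Rt)"
  proof
    fix x
    assume "x \<in> corner ` W"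
    then obtain w where w: "w \<in> W" "x = corner w"
      by blast
    have "length w = D"
      using W w(1) by auto
    then obtain f mt where f: "\<And>i. fst (corner w) $ i = a0 $ i + real (f i) * side D i"
      and mt: "snd (corner w) = ta0 + real mt * height D"
      using corner_on_grid[of w] by (auto simp: choice_iff)
    have "(f, mt) \<in> PiE UNIV R \<times> Rt"
      using R[OF w(1) f] Rt[OF w(1) mt] by auto
    moreover have "x = grid_point (f, mt)"
      unfolding grid_point_def w(2) using f mt by (simp add: prod_eq_iff vec_eq_iff)
    ultimately show "x \<in> grid_point ` (PiE UNIV R \<times> Rt)"
      by blast
  qed
  then have "card (corner ` W) \<le> card (grid_point ` (PiE UNIV R \<times> Rt))"
    using fin by (intro card_mono) (auto simp: finite_PiE)
  also have "\<dots> \<le> card (PiE UNIV R \<times> Rt)"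
    by (rule card_image_le) (use fin in \<open>auto simp: finite_PiE\<close>)
  also have "card (corner ` W) = card W"
    using inj_on_subset[OF inj_on_corner W] by (rule card_image)
  finally show ?thesis
    by (simp add: card_cartesian_product card_PiE)
qed

lemma card_cells_near_le:
  fixes k :: nat and d :: real and q0 :: "'n pt"
  assumes d: "0 \<le> d"
  defines "l \<equiv> L / 2 ^ k"
  shows "real (card {w. length w = (CARD('n) + 2) * k \<and>
      (\<exists>q\<in>closed_cell w. (\<forall>i. \<bar>fst q $ i - fst q0 $ i\<bar> \<le> d) \<and> \<bar>snd q - snd q0\<bar> \<le> d\<^sup>2)})
    \<le> (2 * d / l + 2) ^ CARD('n) * (2 * d\<^sup>2 / l\<^sup>2 + 2)"
proof -
  define D where "D = (CARD('n) + 2) * k"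
  define W where "W = {w. length w = D \<and>
      (\<exists>q\<in>closed_cell w. (\<forall>i. \<bar>fst q $ i - fst q0 $ i\<bar> \<le> d) \<and> \<bar>snd q - snd q0\<bar> \<le> d\<^sup>2)}"
  define R where "R i = {m::nat. fst q0 $ i - d - l \<le> a0 $ i + real m * l \<and> a0 $ i + real m * l \<le> fst q0 $ i + d}" for i
  define Rt where "Rt = {m::nat. snd q0 - d\<^sup>2 - l\<^sup>2 \<le> ta0 + real m * l\<^sup>2 \<and> ta0 + real m * l\<^sup>2 \<le> snd q0 + d\<^sup>2}"
  have l: "0 < l"
    unfolding l_def using L_pos by simp
  have time_range: "snd q0 - d\<^sup>2 - l\<^sup>2 \<le> snd q0 + d\<^sup>2"
    using zero_le_power2[of d] zero_le_power2[of l] by linarith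
  have "card W \<le> (\<Prod>i\<in>UNIV. card (R i)) * card Rt"
  proof (rule card_cells_le_grid)
    fix w i m
    assume "w \<in> W"
    then obtain q where w: "length w = (CARD('n) + 2) * k" and q: "q \<in> closed_cell w"
      and close: "\<bar>fst q $ i - fst q0 $ i\<bar> \<le> d" "\<bar>snd q - snd q0\<bar> \<le> d\<^sup>2"
      unfolding W_def D_def by blast
    note box = mem_closed_cell_blockD[OF w q, folded l_def]
    show "fst (corner w) $ i = a0 $ i + real m * side D i \<Longrightarrow> m \<in> R i"
      using box(1)[of i] close(1) unfolding R_def D_def side_block l_def[symmetric]
      by (auto simp: abs_le_iff)
    show "snd (corner w) = ta0 + real m * height D \<Longrightarrow> m \<in> Rt"
      using box(2) close(2) unfolding Rt_def D_def height_block l_def[symmetric]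
      by (auto simp: abs_le_iff)
  next
    show "finite (R i)" for i
      unfolding R_def using l d by (intro card_grid_points_le(1)) auto
    show "finite Rt"
      unfolding Rt_def using l time_range by (intro card_grid_points_le(1)) auto
  qed (auto simp: W_def)
  then have "real (card W) \<le> (\<Prod>i\<in>UNIV. real (card (R i))) * real (card Rt)"
    unfolding of_nat_prod[symmetric] of_nat_mult[symmetric] of_nat_le_iff .
  also have "\<dots> \<le> (\<Prod>i\<in>(UNIV::'n set). 2 * d / l + 2) * (2 * d\<^sup>2 / l\<^sup>2 + 2)"
  proof (intro mult_mono prod_mono conjI)
    show "real (card (R i)) \<le> 2 * d / l + 2" for i
      using card_grid_points_le(2)[OF l, of "fst q0 $ i - d - l" "fst q0 $ i + d" "a0 $ i"] l d
      unfolding R_def by (simp add: add_divide_distrib)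
    show "real (card Rt) \<le> 2 * d\<^sup>2 / l\<^sup>2 + 2"
      using card_grid_points_le(2)[of "l\<^sup>2" "snd q0 - d\<^sup>2 - l\<^sup>2" "snd q0 + d\<^sup>2" ta0] l time_range
      unfolding Rt_def by (simp add: add_divide_distrib)
  qed (use l d in \<open>auto intro: prod_nonneg\<close>)
  finally show ?thesis
    by (simp add: W_def D_def)
qed

lemma card_cells_meeting_le:
  fixes k :: nat and d :: real
  assumes A: "bounded A" "A \<noteq> {}" "pdiam A \<le> d"
  shows "real (card {w. length w = (CARD('n) + 2) * k \<and> closed_cell w \<inter> A \<noteq> {}})
    \<le> (2 * d / (L / 2 ^ k) + 2) ^ CARD('n) * (2 * d\<^sup>2 / (L / 2 ^ k)\<^sup>2 + 2)"
proof -
  obtain q0 where q0: "q0 \<in> A"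
    using A(2) by blast
  have close: "(\<forall>i. \<bar>fst q $ i - fst q0 $ i\<bar> \<le> d) \<and> \<bar>snd q - snd q0\<bar> \<le> d\<^sup>2" if "q \<in> A" for q
  proof -
    have "pdist q q0 \<le> d"
      using pdist_le_pdiam[OF A(1) that q0] A(3) by linarith
    then show ?thesis
      using abs_component_le_pdist[where p = q and q = q0] abs_time_le_pdist_sq[of q q0]
        power_mono[of "pdist q q0" d 2] pdist_nonneg[of q q0] by (meson order_trans)
  qed
  have "card {w. length w = (CARD('n) + 2) * k \<and> closed_cell w \<inter> A \<noteq> {}}
      \<le> card {w. length w = (CARD('n) + 2) * k \<and>
        (\<exists>q\<in>closed_cell w. (\<forall>i. \<bar>fst q $ i - fst q0 $ i\<bar> \<le> d) \<and> \<bar>snd q - snd q0\<bar> \<le> d\<^sup>2)}"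
    using close finite_lists_length_eq[of "UNIV :: bool set" "(CARD('n) + 2) * k"]
    by (intro card_mono) (auto elim: rev_finite_subset)
  also have "real \<dots> \<le> (2 * d / (L / 2 ^ k) + 2) ^ CARD('n) * (2 * d\<^sup>2 / (L / 2 ^ k)\<^sup>2 + 2)"
    using card_cells_near_le[of d k q0] pdiam_nonneg[OF A(1)] A(3) by simp
  finally show ?thesis
    by simp
qed

lemma card_top_layer_cells_le:
  "card {w. length w = (CARD('n) + 2) * m \<and> cell w \<inter> {p. ta0 + L\<^sup>2 - (L / 2 ^ m)\<^sup>2 \<le> snd p} \<noteq> {}}
     \<le> 2 ^ (m * CARD('n))"
proof -
  define l where "l = L / 2 ^ m"
  have l: "0 < l" "2 ^ m * l = L" "4 ^ m * l\<^sup>2 = L\<^sup>2"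
    unfolding l_def using L_pos by (simp_all add: power2_eq_square power_mult_distrib[symmetric])
  have "card {w. length w = (CARD('n) + 2) * m \<and> cell w \<inter> {p. ta0 + L\<^sup>2 - l\<^sup>2 \<le> snd p} \<noteq> {}}
      \<le> (\<Prod>i\<in>(UNIV::'n set). card {..<(2::nat) ^ m}) * card {(4::nat) ^ m - 1}"
  proof (rule card_cells_le_grid)
    fix w
    assume "w \<in> {w. length w = (CARD('n) + 2) * m \<and> cell w \<inter> {p. ta0 + L\<^sup>2 - l\<^sup>2 \<le> snd p} \<noteq> {}}"
    then obtain p where w: "length w = (CARD('n) + 2) * m" and p: "p \<in> cell w" "ta0 + L\<^sup>2 - l\<^sup>2 \<le> snd p"
      by blast
    have "corner w \<in> cell []"
      using corner_in_cell cell_subset_root by blast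
    then have root: "fst (corner w) $ i < a0 $ i + L" "snd (corner w) < ta0 + L\<^sup>2" for i
      unfolding cell_def by auto
    show "k \<in> {..<2 ^ m}" if "fst (corner w) $ i = a0 $ i + real k * side ((CARD('n) + 2) * m) i" for i k
    proof -
      have "real k * l < real (2 ^ m) * l"
        using root(1)[of i] that l unfolding side_block l_def[symmetric] by auto
      then show ?thesis
        using l(1) by simp
    qed
    show "k \<in> {4 ^ m - 1}" if "snd (corner w) = ta0 + real k * height ((CARD('n) + 2) * m)" for k
    proof -
      have "real k * l\<^sup>2 < real (4 ^ m) * l\<^sup>2"
        using root(2) that l unfolding height_block l_def[symmetric] by auto
      moreover have "height (length w) = l\<^sup>2"
        by (simp only: w height_block l_def)
      then have "snd p < snd (corner w) + l\<^sup>2"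
        using p(1) unfolding cell_def by simp
      then have "real (4 ^ m) * l\<^sup>2 < (real k + 2) * l\<^sup>2"
        using p(2) that l unfolding height_block l_def[symmetric] by (simp add: algebra_simps)
      ultimately have "real k < real (4 ^ m)" "real (4 ^ m) < real (k + 2)"
        using l(1) by (simp_all add: mult_less_cancel_right_pos)
      then have "k < 4 ^ m" "4 ^ m < k + 2"
        by (simp_all only: of_nat_less_iff)
      then show ?thesis
        by simp
    qed
  qed auto
  then show ?thesis
    by (simp add: l_def power_mult)
qed

lemma phcontent_top_layer_le:
  assumes "0 \<le> s"
  shows "phcontent s (cell [] \<inter> {p. ta0 + L\<^sup>2 - (L / 2 ^ m)\<^sup>2 \<le> snd p})
    \<le> ennreal (2 ^ (m * CARD('n)) * (real CARD('n) * (L / 2 ^ m)) powr s)"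
proof -
  define layer :: "'n pt set" where "layer = {p. ta0 + L\<^sup>2 - (L / 2 ^ m)\<^sup>2 \<le> snd p}"
  define W where "W = {w. length w = (CARD('n) + 2) * m \<and> cell w \<inter> layer \<noteq> {}}"
  define \<delta> where "\<delta> = real CARD('n) * (L / 2 ^ m)"
  have "finite W"
    using finite_lists_length_eq[of "UNIV :: bool set" "(CARD('n) + 2) * m"] unfolding W_def
    by (rule rev_finite_subset) auto
  have "cell [] \<inter> layer \<subseteq> (\<Union>w\<in>W. cell w)"
    using cells_cover_root[of "(CARD('n) + 2) * m"] unfolding W_def by blast
  then have "phcontent s (cell [] \<inter> layer) \<le> (\<Sum>w\<in>W. phcontent s (cell w))"
    using phcontent_mono phcontent_UN_le[OF \<open>finite W\<close>] by (blast intro: order_trans)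
  also have "\<dots> \<le> (\<Sum>w\<in>W. ennreal (\<delta> powr s))"
  proof (rule sum_mono)
    fix w
    assume "w \<in> W"
    then have "pdiam (closed_cell w) \<le> \<delta>"
      using pdiam_closed_cell_le unfolding W_def \<delta>_def by blast
    then have "pdiam (closed_cell w) powr s \<le> \<delta> powr s"
      using assms pdiam_nonneg[OF bounded_closed_cell] by (intro powr_mono2) auto
    then show "phcontent s (cell w) \<le> ennreal (\<delta> powr s)"
      using phcontent_le_pdiam[OF bounded_closed_cell cell_subset_closed_cell] order_trans ennreal_leI
      by blast
  qed
  also have "\<dots> = ennreal (real (card W) * \<delta> powr s)"
    by (simp add: ennreal_of_nat_eq_real_of_nat ennreal_mult')
  also have "\<dots> \<le> ennreal (2 ^ (m * CARD('n)) * \<delta> powr s)"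
    using card_top_layer_cells_le[of m] unfolding W_def layer_def
    by (intro ennreal_leI mult_right_mono) (simp_all add: of_nat_le_iff[symmetric])
  finally show ?thesis
    unfolding layer_def \<delta>_def .
qed

end

section \<open>Frostman's lemma for the parabolic Hausdorff content\<close>

definition frostman_const :: "nat \<Rightarrow> real" where
  "frostman_const n = (4 * real n + 2) ^ n * (8 * (real n)\<^sup>2 + 2)"

lemma frostman_const_ge_1: "1 \<le> frostman_const n"
proof -
  have "1 * 1 \<le> (4 * real n + 2) ^ n * (8 * (real n)\<^sup>2 + 2)"
    by (intro mult_mono one_le_power) auto
  then show ?thesis
    by (simp add: frostman_const_def)
qed

context parabolic_cells
begin

lemma card_cells_meeting_le_frostman_const:
  assumes "bounded A" "pdiam A < 2 * real CARD('n) * (L / 2 ^ k)"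
  shows "real (card {w. length w = (CARD('n) + 2) * k \<and> closed_cell w \<inter> A \<noteq> {}}) \<le> frostman_const CARD('n)"
proof (cases "A = {}")
  case True
  then show ?thesis
    using frostman_const_ge_1[of "CARD('n)"] by simp
next
  case False
  define l where "l = L / 2 ^ k"
  define d where "d = pdiam A"
  have l: "0 < l"
    unfolding l_def using L_pos by simp
  have d: "0 \<le> d" "d < 2 * real CARD('n) * l"
    using pdiam_nonneg[OF assms(1)] assms(2) unfolding d_def l_def by simp_all
  have "2 * d / l + 2 \<le> 4 * real CARD('n) + 2"
    using d l by (simp add: field_simps)
  moreover have "d\<^sup>2 \<le> (2 * real CARD('n) * l)\<^sup>2"
    using d by (intro power_mono) auto
  then have "2 * d\<^sup>2 / l\<^sup>2 + 2 \<le> 8 * (real CARD('n))\<^sup>2 + 2"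
    using l by (simp add: field_simps power_mult_distrib)
  ultimately have "(2 * d / l + 2) ^ CARD('n) * (2 * d\<^sup>2 / l\<^sup>2 + 2) \<le> frostman_const CARD('n)"
    unfolding frostman_const_def using d l by (intro mult_mono power_mono) auto
  then show ?thesis
    using card_cells_meeting_le[OF assms(1) False, of d k] unfolding d_def l_def by simp
qed

lemma emeasure_le_card_cells:
  fixes \<mu> :: "'n pt measure" and F :: "bool list \<Rightarrow> real"
  assumes s: "0 < s"
    and F_le: "\<And>w. F w \<le> pdiam (closed_cell w) powr s"
    and \<mu>_le: "\<And>d. emeasure \<mu> A \<le> ennreal (\<Sum>w | length w = d \<and> closed_cell w \<inter> A \<noteq> {}. F w)"
  shows "emeasure \<mu> A \<le> ennreal (real (card {w. length w = (CARD('n) + 2) * k \<and> closed_cell w \<inter> A \<noteq> {}})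
    * (real CARD('n) * L / 2 ^ k) powr s)"
proof -
  define W where "W = {w. length w = (CARD('n) + 2) * k \<and> closed_cell w \<inter> A \<noteq> {}}"
  have "F w \<le> (real CARD('n) * L / 2 ^ k) powr s" if "w \<in> W" for w
  proof -
    have "pdiam (closed_cell w) \<le> real CARD('n) * L / 2 ^ k"
      using pdiam_closed_cell_le[of w k] that unfolding W_def by simp
    then have "pdiam (closed_cell w) powr s \<le> (real CARD('n) * L / 2 ^ k) powr s"
      using s pdiam_nonneg[OF bounded_closed_cell] by (intro powr_mono2) auto
    then show ?thesis
      using F_le[of w] by linarith
  qed
  then have "(\<Sum>w\<in>W. F w) \<le> real (card W) * (real CARD('n) * L / 2 ^ k) powr s"
    by (rule sum_bounded_above)
  then show ?thesis
    using \<mu>_le[of "(CARD('n) + 2) * k"] unfolding W_def by (meson ennreal_leI order_trans)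
qed

lemma emeasure_le_frostman_const_at_scale:
  fixes \<mu> :: "'n pt measure" and F :: "bool list \<Rightarrow> real"
  assumes s: "0 < s" and A: "bounded A" "pdiam A < 2 * (real CARD('n) * L / 2 ^ k)"
    and F_le: "\<And>w. F w \<le> pdiam (closed_cell w) powr s"
    and \<mu>_le: "\<And>d. emeasure \<mu> A \<le> ennreal (\<Sum>w | length w = d \<and> closed_cell w \<inter> A \<noteq> {}. F w)"
  shows "emeasure \<mu> A \<le> ennreal (frostman_const CARD('n) * (real CARD('n) * L / 2 ^ k) powr s)"
proof -
  have "real (card {w. length w = (CARD('n) + 2) * k \<and> closed_cell w \<inter> A \<noteq> {}}) \<le> frostman_const CARD('n)"
    using card_cells_meeting_le_frostman_const[OF A(1), of k] A(2) by simp
  then show ?thesis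
    using emeasure_le_card_cells[OF s F_le \<mu>_le, of k]
    by (meson ennreal_leI mult_right_mono order_trans powr_ge_zero)
qed

lemma emeasure_le_frostman_const:
  fixes \<mu> :: "'n pt measure" and F :: "bool list \<Rightarrow> real"
  assumes s: "0 < s" and A: "bounded A"
    and F_le: "\<And>w. F w \<le> pdiam (closed_cell w) powr s"
    and \<mu>_le: "\<And>d. emeasure \<mu> A \<le> ennreal (\<Sum>w | length w = d \<and> closed_cell w \<inter> A \<noteq> {}. F w)"
  shows "emeasure \<mu> A \<le> ennreal (frostman_const CARD('n) * pdiam A powr s)"
proof -
  define \<delta> where "\<delta> k = real CARD('n) * L / 2 ^ k" for k :: nat
  define W where "W k = {w. length w = (CARD('n) + 2) * k \<and> closed_cell w \<inter> A \<noteq> {}}" for k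
  have \<delta>_pos: "0 < \<delta> k" for k
    unfolding \<delta>_def using L_pos by simp
  have level: "emeasure \<mu> A \<le> ennreal (real (card (W k)) * \<delta> k powr s)" for k
    unfolding W_def \<delta>_def using s F_le \<mu>_le by (rule emeasure_le_card_cells)
  have fine: "emeasure \<mu> A \<le> ennreal (frostman_const CARD('n) * \<delta> k powr s)"
    if "pdiam A < 2 * \<delta> k" for k
    using emeasure_le_frostman_const_at_scale[OF s A that[unfolded \<delta>_def] F_le \<mu>_le] unfolding \<delta>_def .
  have "pdiam A = 0 \<or> (0 < pdiam A \<and> pdiam A < \<delta> 0) \<or> \<delta> 0 \<le> pdiam A"
    using pdiam_nonneg[OF A] by linarith
  then show ?thesis
  proof (elim disjE conjE)
    assume "pdiam A = 0"
    have "(\<lambda>k. ennreal (frostman_const CARD('n) * \<delta> k powr s)) \<longlonglongrightarrow> ennreal (frostman_const CARD('n) * 0)"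
      unfolding \<delta>_def using s L_pos
      by (intro tendsto_ennrealI tendsto_mult tendsto_const tendsto_zero_powrI LIMSEQ_divide_realpow_zero) auto
    then have "emeasure \<mu> A \<le> 0"
      using fine \<delta>_pos \<open>pdiam A = 0\<close> by (intro LIMSEQ_le_const) auto
    then show ?thesis
      by simp
  next
    assume "0 < pdiam A" "pdiam A < \<delta> 0"
    then obtain k where k: "\<delta> (Suc k) \<le> pdiam A" "pdiam A < \<delta> k"
      using dyadic_bracket unfolding \<delta>_def by (metis power_0 div_by_1)
    have "emeasure \<mu> A \<le> ennreal (frostman_const CARD('n) * \<delta> (Suc k) powr s)"
      using k(2) by (intro fine) (simp add: \<delta>_def)
    also have "\<dots> \<le> ennreal (frostman_const CARD('n) * pdiam A powr s)"
      using k(1) \<delta>_pos[of "Suc k"] s frostman_const_ge_1[of "CARD('n)"]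
      by (intro ennreal_leI mult_left_mono powr_mono2) auto
    finally show ?thesis .
  next
    assume "\<delta> 0 \<le> pdiam A"
    have "W 0 \<subseteq> {[]}"
      unfolding W_def by auto
    then have "real (card (W 0)) \<le> 1"
      using card_mono[of "{[]}" "W 0"] by simp
    then have "real (card (W 0)) * \<delta> 0 powr s \<le> frostman_const CARD('n) * pdiam A powr s"
      using \<open>\<delta> 0 \<le> pdiam A\<close> \<delta>_pos[of 0] s frostman_const_ge_1[of "CARD('n)"]
      by (intro mult_mono powr_mono2) auto
    then show ?thesis
      using level[of 0] by (meson ennreal_leI order_trans)
  qed
qed

lemma phcontent_cell_le_children:
  "phcontent s (K \<inter> cell w) \<le> phcontent s (K \<inter> cell (False # w)) + phcontent s (K \<inter> cell (True # w))"
proof -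
  have "phcontent s (K \<inter> cell w) \<le> phcontent s (K \<inter> cell (False # w) \<union> K \<inter> cell (True # w))"
    using cell_subset_children by (intro phcontent_mono) blast
  also have "\<dots> \<le> phcontent s (K \<inter> cell (False # w)) + phcontent s (K \<inter> cell (True # w))"
    by (rule phcontent_Un_le)
  finally show ?thesis .
qed

lemma frostman_measure_root_cell:
  assumes K: "closed K" "K \<subseteq> cell []" and s: "0 < s"
  shows "\<exists>\<mu>. sets \<mu> = sets borel \<and> emeasure \<mu> K = phcontent s K \<and>
    (\<forall>A\<in>sets borel. bounded A \<longrightarrow> emeasure \<mu> A \<le> ennreal (frostman_const CARD('n) * pdiam A powr s))"
proof -
  define F where "F w = enn2real (phcontent s (K \<inter> cell w))" for w
  have content_le: "phcontent s (K \<inter> cell w) \<le> ennreal (pdiam (closed_cell w) powr s)" for w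
    using cell_subset_closed_cell by (intro phcontent_le_pdiam[OF bounded_closed_cell]) blast
  have F_eq: "ennreal (F w) = phcontent s (K \<inter> cell w)" for w
    using neq_top_trans[OF ennreal_neq_top content_le[of w]] unfolding F_def
    by (simp add: ennreal_enn2real_if)
  have F_le: "F w \<le> pdiam (closed_cell w) powr s" for w
    unfolding F_def using content_le by (intro enn2real_leI) simp_all
  have F_nonneg: "0 \<le> F w" for w
    by (simp add: F_def)
  interpret tree_cover F K cell closed_cell
  proof
    show "0 \<le> F w" for w
      by (rule F_nonneg)
    show "F w \<le> F (False # w) + F (True # w)" for w
    proof -
      have "phcontent s (K \<inter> cell w) \<le> phcontent s (K \<inter> cell (False # w)) + phcontent s (K \<inter> cell (True # w))"
        by (rule phcontent_cell_le_children)
      also have "\<dots> = ennreal (F (False # w) + F (True # w))"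
        unfolding F_eq[symmetric] by (intro ennreal_plus[symmetric] F_nonneg)
      finally have "ennreal (F w) \<le> ennreal (F (False # w) + F (True # w))"
        unfolding F_eq[symmetric] .
      then show ?thesis
        using ennreal_le_iff[OF add_nonneg_nonneg[OF F_nonneg F_nonneg]] by blast
    qed
    show "cell w \<inter> K \<noteq> {}" if "0 < F w" for w
    proof
      assume "cell w \<inter> K = {}"
      then have "K \<inter> cell w = {}"
        by blast
      then show False
        using that by (simp add: F_def)
    qed
  qed (fact K(1) cell_Cons_subset cell_subset_closed_cell closed_closed_cell cells_shrink)+
  show ?thesis
  proof (intro exI conjI ballI impI)
    show "emeasure tree_measure K = phcontent s K"
      using emeasure_tree_measure_K F_eq[of "[]"] K(2) by (simp add: Int_absorb2)
    show "emeasure tree_measure A \<le> ennreal (frostman_const CARD('n) * pdiam A powr s)"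
      if "A \<in> sets borel" "bounded A" for A
      using emeasure_le_frostman_const[OF s that(2) F_le emeasure_tree_measure_le[OF that(1)]] .
  qed simp
qed

end

lemma ex_bij_betw_lessThan_CARD: "\<exists>e :: nat \<Rightarrow> 'n::finite. bij_betw e {..<CARD('n)} UNIV"
  using ex_bij_betw_nat_finite[of "UNIV :: 'n set"] by (auto simp: atLeast0LessThan)

lemma parabolic_frostman:
  fixes K :: "'n::finite pt set"
  assumes "closed K" "bounded K" "0 < s"
  shows "\<exists>\<mu>. sets \<mu> = sets borel \<and> emeasure \<mu> K = phcontent s K \<and>
    (\<forall>A\<in>sets borel. bounded A \<longrightarrow> emeasure \<mu> A \<le> ennreal (frostman_const CARD('n) * pdiam A powr s))"
proof -
  obtain R where R: "0 < R" "\<And>x. x \<in> K \<Longrightarrow> norm x \<le> R"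
    using bounded_pos assms(2) by blast
  obtain e :: "nat \<Rightarrow> 'n" where "bij_betw e {..<CARD('n)} UNIV"
    using ex_bij_betw_lessThan_CARD by blast
  then interpret parabolic_cells e "2 * R + 1" "\<chi> i. - R" "- R"
    using R(1) by unfold_locales auto
  have "K \<subseteq> cell []"
  proof
    fix p
    assume "p \<in> K"
    then have x: "norm (fst p) \<le> R" and t: "\<bar>snd p\<bar> \<le> R"
      using R(2) norm_fst_le[of "fst p" "snd p"] norm_snd_le[of "snd p" "fst p"] by fastforce+
    show "p \<in> cell []"
    proof (rule mem_cell_NilI)
      show "(\<chi> i. - R) $ i \<le> fst p $ i \<and> fst p $ i < (\<chi> i. - R) $ i + (2 * R + 1)" for i
        using component_le_norm_cart[of "fst p" i] x by (simp add: abs_le_iff)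
      have "2 * R < (2 * R + 1)\<^sup>2"
        using R(1) by (simp add: power2_eq_square algebra_simps) (smt (verit) mult_pos_pos)
      then show "- R \<le> snd p" "snd p < - R + (2 * R + 1)\<^sup>2"
        using t by (simp_all add: abs_le_iff)
    qed
  qed
  then show ?thesis
    by (rule frostman_measure_root_cell[OF assms(1) _ assms(3)])
qed

lemma phcontent_slab_le:
  fixes x0 :: "real^'n::finite"
  assumes "0 < \<rho>" "0 \<le> s"
  shows "phcontent s (cball x0 \<rho> \<times> {t0 - (4 * \<rho> / 2 ^ m)\<^sup>2 <..< t0})
    \<le> ennreal (2 ^ (m * CARD('n)) * (real CARD('n) * (4 * \<rho> / 2 ^ m)) powr s)"
proof -
  obtain e :: "nat \<Rightarrow> 'n" where "bij_betw e {..<CARD('n)} UNIV"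
    using ex_bij_betw_lessThan_CARD by blast
  then interpret parabolic_cells e "4 * \<rho>" "\<chi> i. x0 $ i - \<rho>" "t0 - (4 * \<rho>)\<^sup>2"
    using assms(1) by unfold_locales auto
  have "cball x0 \<rho> \<times> {t0 - (4 * \<rho> / 2 ^ m)\<^sup>2 <..< t0}
      \<subseteq> cell [] \<inter> {p. t0 - (4 * \<rho>)\<^sup>2 + (4 * \<rho>)\<^sup>2 - (4 * \<rho> / 2 ^ m)\<^sup>2 \<le> snd p}"
  proof
    fix p
    assume p: "p \<in> cball x0 \<rho> \<times> {t0 - (4 * \<rho> / 2 ^ m)\<^sup>2 <..< t0}"
    have comp: "\<bar>fst p $ i - x0 $ i\<bar> \<le> \<rho>" for i
      using p component_le_norm_cart[of "fst p - x0" i] by (auto simp: dist_norm norm_minus_commute mem_Times_iff)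
    have "p \<in> cell []"
    proof (rule mem_cell_NilI)
      show "(\<chi> i. x0 $ i - \<rho>) $ i \<le> fst p $ i \<and> fst p $ i < (\<chi> i. x0 $ i - \<rho>) $ i + 4 * \<rho>" for i
        using comp[of i] assms(1) by (simp add: abs_le_iff)
      have "(4 * \<rho> / 2 ^ m)\<^sup>2 \<le> (4 * \<rho>)\<^sup>2"
        using assms(1) by (intro power_mono) (auto simp: divide_le_eq)
      then show "t0 - (4 * \<rho>)\<^sup>2 \<le> snd p" "snd p < t0 - (4 * \<rho>)\<^sup>2 + (4 * \<rho>)\<^sup>2"
        using p by (auto simp: mem_Times_iff)
    qed
    then show "p \<in> cell [] \<inter> {p. t0 - (4 * \<rho>)\<^sup>2 + (4 * \<rho>)\<^sup>2 - (4 * \<rho> / 2 ^ m)\<^sup>2 \<le> snd p}"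
      using p by (simp add: mem_Times_iff)
  qed
  then show ?thesis
    using phcontent_mono phcontent_top_layer_le[OF assms(2), of m] by (blast intro: order_trans)
qed

section \<open>Measures supported below a boundary point\<close>

lemma PQminus_subset_cylinder: "PQminus \<rho> (x0, t0) \<subseteq> cball x0 \<rho> \<times> {t0 - \<rho>\<^sup>2 <..< t0}"
proof
  fix q
  assume "q \<in> PQminus \<rho> (x0, t0)"
  then have q: "pdist (x0, t0) q < \<rho>" "snd q < t0"
    unfolding PQminus_def PQ_def by auto
  have "norm (x0 - fst q) < \<rho>"
    using norm_fst_le_pnorm[of "(x0, t0) - q"] q(1) unfolding pdist_def by simp
  moreover have "(pdist (x0, t0) q)\<^sup>2 < \<rho>\<^sup>2"
    using q(1) pdist_nonneg[of "(x0, t0)" q] by (intro power_strict_mono) auto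
  then have "t0 - snd q < \<rho>\<^sup>2"
    using abs_time_le_pdist_sq[of "(x0, t0)" q] by simp
  ultimately show "q \<in> cball x0 \<rho> \<times> {t0 - \<rho>\<^sup>2 <..< t0}"
    using q(2) by (cases q) (auto simp: dist_norm)
qed

lemma dyadic_slab_bound:
  fixes n :: nat and b \<rho> \<epsilon> :: real
  assumes "0 < n" "0 < b" "0 < \<rho>" "0 < \<epsilon>"
    and m: "2 * (4 * real n) powr (real n + \<epsilon>) / b \<le> (2 powr \<epsilon>) ^ m"
  shows "2 ^ (m * n) * (real n * (4 * \<rho> / 2 ^ m)) powr (real n + \<epsilon>) \<le> b * \<rho> powr (real n + \<epsilon>) / 2"
proof -
  define s where "s = real n + \<epsilon>"
  define c where "c = 2 powr \<epsilon>"
  have c: "0 < c ^ m"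
    unfolding c_def by simp
  have "((2::real) ^ m) powr \<epsilon> = c ^ m"
    unfolding c_def by (simp add: powr_realpow[symmetric] powr_powr mult.commute)
  then have "((2::real) ^ m) powr s = 2 ^ (m * n) * c ^ m"
    unfolding s_def by (simp add: powr_add powr_realpow power_mult)
  then have "2 ^ (m * n) * (real n * (4 * \<rho> / 2 ^ m)) powr s = (4 * real n * \<rho>) powr s / c ^ m"
    using assms(1,3) c by (simp add: powr_divide mult.assoc mult.left_commute)
  also have "\<dots> \<le> (4 * real n * \<rho>) powr s * (b / (2 * (4 * real n) powr s))"
  proof -
    have "1 / c ^ m \<le> b / (2 * (4 * real n) powr s)"
      using m c assms(1,2) unfolding s_def[symmetric] c_def[symmetric] by (simp add: field_simps)
    then show ?thesis
      using mult_left_mono[of "1 / c ^ m" "b / (2 * (4 * real n) powr s)" "(4 * real n * \<rho>) powr s"]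
      by simp
  qed
  also have "\<dots> = b * \<rho> powr s / 2"
    using assms(1,3) by (simp add: powr_mult)
  finally show ?thesis
    unfolding s_def .
qed

lemma phcontent_backward_compact_ge:
  fixes \<Omega> :: "'n::finite pt set" and x0 :: "real^'n" and \<epsilon> :: real
  defines "s \<equiv> real CARD('n) + \<epsilon>"
  assumes "0 < b" "0 < \<epsilon>" "0 < \<rho>"
    and content: "ennreal (b * \<rho> powr s) \<le> phcontent s (PQminus \<rho> (x0, t0) \<inter> - \<Omega>)"
    and m: "2 * (4 * real CARD('n)) powr s / b \<le> (2 powr \<epsilon>) ^ m"
  shows "ennreal (b * \<rho> powr s / 2)
    \<le> phcontent s ((cball x0 \<rho> \<times> {t0 - \<rho>\<^sup>2 .. t0 - (4 * \<rho> / 2 ^ m)\<^sup>2}) \<inter> - \<Omega>)"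
proof -
  define h where "h = (4 * \<rho> / 2 ^ m)\<^sup>2"
  define K where "K = (cball x0 \<rho> \<times> {t0 - \<rho>\<^sup>2 .. t0 - h}) \<inter> - \<Omega>"
  define half where "half = ennreal (b * \<rho> powr s / 2)"
  have "PQminus \<rho> (x0, t0) \<inter> - \<Omega> \<subseteq> K \<union> cball x0 \<rho> \<times> {t0 - h <..< t0}"
    using PQminus_subset_cylinder[of \<rho> x0 t0] unfolding K_def by (auto simp: mem_Times_iff)
  then have "ennreal (b * \<rho> powr s) \<le> phcontent s K + phcontent s (cball x0 \<rho> \<times> {t0 - h <..< t0})"
    using content phcontent_mono phcontent_Un_le by (blast intro: order_trans)
  also have "phcontent s (cball x0 \<rho> \<times> {t0 - h <..< t0}) \<le> half"
  proof -
    have "2 ^ (m * CARD('n)) * (real CARD('n) * (4 * \<rho> / 2 ^ m)) powr s \<le> b * \<rho> powr s / 2"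
      using dyadic_slab_bound[of "CARD('n)" b \<rho> \<epsilon> m] assms m unfolding s_def by simp
    then show ?thesis
      using phcontent_slab_le[of \<rho> s x0 t0 m] assms(2,3,4) unfolding h_def half_def s_def
      by (simp add: order_trans ennreal_leI)
  qed
  finally have "half + half \<le> half + phcontent s K"
    using assms(2,4) by (simp add: half_def add.commute add_left_mono flip: ennreal_plus)
  then show ?thesis
    unfolding half_def K_def h_def by (simp add: ennreal_add_left_cancel_le)
qed

lemma TBHCC_phcontent_ge:
  fixes \<Omega> :: "'n::finite pt set"
  assumes "TBHCC \<Omega> b \<epsilon>" "(x0, t0) \<in> Sigma_bdry \<Omega>" "Tmin \<Omega> < ereal (t0 - (4 * r)\<^sup>2)" "0 < \<rho>" "\<rho> \<le> r"
  shows "ennreal (b * \<rho> powr (real CARD('n) + \<epsilon>)) \<le> phcontent (real CARD('n) + \<epsilon>) (PQminus \<rho> (x0, t0) \<inter> - \<Omega>)"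
proof -
  have "(4 * \<rho>)\<^sup>2 \<le> (4 * r)\<^sup>2"
    using assms(4,5) by (intro power_mono) auto
  then have "Tmin \<Omega> < ereal (snd (x0, t0) - (4 * \<rho>)\<^sup>2)"
    using assms(3) by (simp add: order_less_le_trans)
  then show ?thesis
    using assms(1,2,4) unfolding TBHCC_def by blast
qed

lemma backward_compact_subset_cylinder:
  assumes "0 < r"
  shows "cball x0 (r / 2) \<times> {t0 - (r / 2)\<^sup>2 .. t0 - (4 * (r / 2) / 2 ^ m)\<^sup>2}
    \<subseteq> ball x0 r \<times> {t0 - r\<^sup>2 <..< t0 - (r / 2 ^ m)\<^sup>2}"
proof -
  have "(r / 2 ^ m)\<^sup>2 < (4 * (r / 2) / 2 ^ m)\<^sup>2" "(r / 2)\<^sup>2 < r\<^sup>2"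
    using assms by (intro power_strict_mono divide_strict_right_mono; simp)+
  then show ?thesis
    using assms by (auto simp: mem_Times_iff)
qed

lemma TBHCC_backward_frostman_measure:
  fixes \<Omega> :: "'n::finite pt set" and x0 :: "real^'n" and \<epsilon> :: real
  defines "s \<equiv> real CARD('n) + \<epsilon>"
  assumes \<Omega>: "open \<Omega>" "TBHCC \<Omega> b \<epsilon>"
    and p: "(x0, t0) \<in> Sigma_bdry \<Omega>" "Tmin \<Omega> < ereal (t0 - (4 * r)\<^sup>2)"
    and pos: "0 < b" "0 < \<epsilon>" "0 < r"
    and m: "2 * (4 * real CARD('n)) powr s / b \<le> (2 powr \<epsilon>) ^ m"
  shows "\<exists>\<mu>. sets \<mu> = sets borel \<and>
    ennreal (b / 2 * (1 / 2) powr s * r powr s)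
      \<le> emeasure \<mu> ((ball x0 r \<times> {t0 - r\<^sup>2 <..< t0 - (r / 2 ^ m)\<^sup>2}) \<inter> - \<Omega>) \<and>
    (\<forall>A\<in>sets borel. bounded A \<longrightarrow> emeasure \<mu> A \<le> ennreal (frostman_const CARD('n) * pdiam A powr s))"
proof -
  have content: "ennreal (b * (r / 2) powr s) \<le> phcontent s (PQminus (r / 2) (x0, t0) \<inter> - \<Omega>)"
    using TBHCC_phcontent_ge[OF \<Omega>(2) p, of "r / 2"] pos(3) unfolding s_def by simp
  define K where "K = (cball x0 (r / 2) \<times> {t0 - (r / 2)\<^sup>2 .. t0 - (4 * (r / 2) / 2 ^ m)\<^sup>2}) \<inter> - \<Omega>"
  define region where "region = (ball x0 r \<times> {t0 - r\<^sup>2 <..< t0 - (r / 2 ^ m)\<^sup>2}) \<inter> - \<Omega>"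
  have "closed K" "bounded K"
    unfolding K_def using \<Omega>(1) by (auto intro!: closed_Int closed_Times bounded_Int bounded_Times)
  moreover have "0 < s"
    unfolding s_def using pos(2) by (simp add: add_nonneg_pos)
  ultimately obtain \<mu> where \<mu>: "sets \<mu> = sets borel" "emeasure \<mu> K = phcontent s K"
    "\<forall>A\<in>sets borel. bounded A \<longrightarrow> emeasure \<mu> A \<le> ennreal (frostman_const CARD('n) * pdiam A powr s)"
    using parabolic_frostman by blast
  have "K \<subseteq> region"
    unfolding K_def region_def using backward_compact_subset_cylinder[OF pos(3), of x0 t0 m] by blast
  moreover have "region \<in> sets \<mu>"
    unfolding region_def \<mu>(1) using \<Omega>(1)
    by (intro sets.Int borel_open[OF open_Times] borel_closed[OF closed_Compl]) auto
  ultimately have "emeasure \<mu> K \<le> emeasure \<mu> region"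
    by (rule emeasure_mono)
  moreover have "ennreal (b / 2 * (1 / 2) powr s * r powr s) \<le> phcontent s K"
  proof -
    have "ennreal (b * (r / 2) powr s / 2) \<le> phcontent s K"
      using phcontent_backward_compact_ge[OF pos(1,2) _ content[unfolded s_def] m[unfolded s_def]] pos(3)
      unfolding K_def s_def by simp
    moreover have "b * (r / 2) powr s / 2 = b / 2 * (1 / 2) powr s * r powr s"
      using pos(3) by (simp add: powr_divide)
    ultimately show ?thesis
      by simp
  qed
  ultimately show ?thesis
    using \<mu> unfolding region_def by auto
qed

lemma ex_power_ge:
  fixes x y :: real
  assumes "1 < x"
  shows "\<exists>m\<ge>k. y \<le> x ^ m"
proof -
  obtain n where "y < x ^ n"
    using real_arch_pow[OF assms] by blast
  moreover have "x ^ n \<le> x ^ (n + k)"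
    using assms by (intro power_increasing) auto
  ultimately show ?thesis
    by (intro exI[of _ "n + k"]) auto
qed

theorem lemma3p9:
  "\<exists>C1>0. \<forall>b>0. \<forall>\<epsilon>>0. \<exists>a c3. 0 < a \<and> a < 1/2 \<and> c3 > 0 \<and>
     (\<forall>\<Omega> :: 'n::finite pt set. open \<Omega> \<and> TBHCC \<Omega> b \<epsilon> \<longrightarrow>
       (\<forall>x0 t0 r. (x0, t0) \<in> Sigma_bdry \<Omega> \<and> 0 < r \<and> Tmin \<Omega> < ereal (t0 - (4*r)^2) \<longrightarrow>
         (\<exists>\<mu> :: 'n pt measure. sets \<mu> = sets borel \<and>
            emeasure \<mu> ((ball x0 r \<times> {t0 - r^2 <..< t0 - (a*r)^2}) \<inter> - \<Omega>)
              \<ge> ennreal (c3 * r powr (real CARD('n) + \<epsilon>)) \<and>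
            (\<forall>A \<in> sets borel. bounded A \<longrightarrow>
               emeasure \<mu> A \<le> ennreal (C1 * pdiam A powr (real CARD('n) + \<epsilon>))))))"
  apply (rule exI[of _ "frostman_const CARD('n)"], intro conjI allI impI)
   apply (rule less_le_trans[OF zero_less_one frostman_const_ge_1])
  subgoal premises pos for b \<epsilon>
  proof -
    define s where "s = real CARD('n) + \<epsilon>"
    obtain m where m: "2 \<le> m" "2 * (4 * real CARD('n)) powr s / b \<le> (2 powr \<epsilon>) ^ m"
      using ex_power_ge[of "2 powr \<epsilon>" 2] pos by auto
    have "(2::real) ^ 2 \<le> 2 ^ m"
      using m(1) by (intro power_increasing) auto
    then have "(1::real) / 2 ^ m < 1 / 2"
      by (simp add: divide_less_eq)
    then show ?thesis
      using TBHCC_backward_frostman_measure[where m = m] pos m(2)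
      by (intro exI[of _ "1 / 2 ^ m"] exI[of _ "b / 2 * (1 / 2) powr s"] conjI allI impI)
        (auto simp: s_def)
  qed
  done

end
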